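(* Let $T>0$ and let $y:[0,T]\to[0,+\infty)$ be continuous. Assume there exists $k\ge0$ such that $$y(t)\le k\int_0^t\frac{1}{s\sqrt{s}}\int_0^s y(\sigma)\,d\sigma\,ds\qquad\text{for every }t\in[0,T].$$ Then $y(t)=0$ for every $t\in[0,T]$. *)

theory Defs
  imports "HOL-Analysis.Analysis"
begin

end

theory Submission
  imports Defs
begin

text \<open>
  If \<open>y\<close> vanishes on \<open>[0, a]\<close> and \<open>m\<close> is its maximum on \<open>[0, b]\<close>, then the inner
  average satisfies \<open>s^(-3/2) \<integral>\<^sub>0\<^sup>s y \<le> m / sqrt s\<close>, whose integral over \<open>[a, b]\<close> is
  \<open>2 m (sqrt b - sqrt a)\<close>. The hypothesis at a maximum point thus gives
  \<open>m \<le> 2 k (sqrt b - sqrt a) m\<close>, forcing \<open>m = 0\<close> once \<open>2 k (sqrt b - sqrt a) < 1\<close>.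
  As \<open>sqrt b - sqrt a \<le> sqrt (b - a)\<close>, steps of one fixed length achieve this, and finitely
  many of them carry the vanishing of \<open>y\<close> from \<open>{0}\<close> to all of \<open>[0, T]\<close>.
\<close>

lemma sqrt_diff_le_sqrt_diff:
  fixes a b :: real
  assumes "0 \<le> a" "a \<le> b"
  shows "sqrt b - sqrt a \<le> sqrt (b - a)"
  using sqrt_add_le_add_sqrt[of a "b - a"] assms by simp

lemma has_integral_inverse_sqrt:
  fixes a b :: real
  assumes "0 \<le> a" "a \<le> b"
  shows "((\<lambda>s. 1 / sqrt s) has_integral 2 * (sqrt b - sqrt a)) {a..b}"
proof -
  have "((\<lambda>s. 1 / sqrt s) has_integral 2 * sqrt b - 2 * sqrt a) {a..b}"
  proof (rule fundamental_theorem_of_calculus_interior[OF \<open>a \<le> b\<close>])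
    show "continuous_on {a..b} (\<lambda>s. 2 * sqrt s)"
      by (intro continuous_intros)
    fix s assume "s \<in> {a<..<b}"
    then have "0 < s" using \<open>0 \<le> a\<close> by auto
    then have "((\<lambda>s. 2 * sqrt s) has_real_derivative 2 * (inverse (sqrt s) / 2)) (at s)"
      using DERIV_cmult[OF DERIV_real_sqrt[OF \<open>0 < s\<close>], of 2] by simp
    then show "((\<lambda>s. 2 * sqrt s) has_vector_derivative 1 / sqrt s) (at s)"
      by (simp add: has_real_derivative_iff_has_vector_derivative inverse_eq_divide)
  qed
  then show ?thesis by (simp add: algebra_simps)
qed

lemma average_le_div_sqrt:
  fixes s m :: real and y :: "real \<Rightarrow> real"
  assumes "0 \<le> s" "y integrable_on {0..s}" "\<And>\<sigma>. \<sigma> \<in> {0..s} \<Longrightarrow> y \<sigma> \<le> m"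
  shows "1 / (s * sqrt s) * integral {0..s} y \<le> m / sqrt s"
proof (cases "s = 0")
  case False
  then have "0 < s" using \<open>0 \<le> s\<close> by simp
  have "integral {0..s} y \<le> integral {0..s} (\<lambda>_. m)"
    using assms by (intro integral_le) auto
  then have "integral {0..s} y \<le> m * s" using \<open>0 < s\<close> by (simp add: mult.commute)
  then have "1 / (s * sqrt s) * integral {0..s} y \<le> 1 / (s * sqrt s) * (m * s)"
    using \<open>0 < s\<close> by (intro mult_left_mono) auto
  also have "\<dots> = m / sqrt s" using \<open>0 < s\<close> by (simp add: field_simps)
  finally show ?thesis .
qed simp

lemma integral_singular_kernel_le:
  fixes a b m :: real and y :: "real \<Rightarrow> real"
  assumes "0 \<le> a" "a \<le> b"
    and cont: "continuous_on {0..b} y"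
    and vanish: "\<And>s. s \<in> {0..a} \<Longrightarrow> y s = 0"
    and bound: "\<And>s. s \<in> {0..b} \<Longrightarrow> y s \<le> m"
  shows "integral {0..b} (\<lambda>s. 1 / (s * sqrt s) * integral {0..s} y) \<le> 2 * m * (sqrt b - sqrt a)"
proof -
  define f where "f = (\<lambda>s::real. 1 / (s * sqrt s) * integral {0..s} y)"
  have "0 \<le> m" using bound[of a] vanish[of a] assms(1,2) by auto
  moreover have "sqrt a \<le> sqrt b" using \<open>a \<le> b\<close> by simp
  ultimately have "0 \<le> 2 * m * (sqrt b - sqrt a)" by simp
  moreover have "integral {0..b} f \<le> 2 * m * (sqrt b - sqrt a)" if "f integrable_on {0..b}"
  proof -
    have majorant: "((\<lambda>s. m * (1 / sqrt s)) has_integral m * (2 * (sqrt b - sqrt a))) {a..b}"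
      using has_integral_inverse_sqrt[OF assms(1,2)] by (rule has_integral_mult_right)
    have "integral {0..a} f = integral {0..a} (\<lambda>_. 0)"
    proof (intro integral_cong)
      fix s assume "s \<in> {0..a}"
      then have "integral {0..s} y = integral {0..s} (\<lambda>_. 0)"
        using vanish by (intro integral_cong) auto
      then show "f s = 0" by (simp add: f_def)
    qed
    then have "integral {0..b} f = integral {a..b} f"
      using Henstock_Kurzweil_Integration.integral_combine[OF assms(1,2) that] by simp
    also have "\<dots> \<le> integral {a..b} (\<lambda>s. m * (1 / sqrt s))"
    proof (intro integral_le integrable_subinterval_real[OF that] has_integral_integrable[OF majorant])
      fix s assume s: "s \<in> {a..b}"
      have "y integrable_on {0..s}"
        using s \<open>0 \<le> a\<close> by (intro integrable_continuous_real continuous_on_subset[OF cont]) auto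
      then show "f s \<le> m * (1 / sqrt s)"
        using average_le_div_sqrt[of s y m] s bound \<open>0 \<le> a\<close> by (auto simp: f_def)
    qed (use \<open>0 \<le> a\<close> in auto)
    also have "\<dots> = 2 * m * (sqrt b - sqrt a)"
      using integral_unique[OF majorant] by simp
    finally show ?thesis .
  qed
  ultimately have "integral {0..b} f \<le> 2 * m * (sqrt b - sqrt a)"
    by (metis not_integrable_integral)
  then show ?thesis by (simp only: f_def)
qed

lemma vanishing_extends:
  fixes T k a b :: real and y :: "real \<Rightarrow> real"
  assumes cont: "continuous_on {0..T} y"
    and nonneg: "\<And>t. t \<in> {0..T} \<Longrightarrow> y t \<ge> 0"
    and "k \<ge> 0"
    and ineq: "\<And>t. t \<in> {0..T} \<Longrightarrow>
           y t \<le> k * integral {0..t} (\<lambda>s. 1 / (s * sqrt s) * integral {0..s} y)"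
    and "0 \<le> a" "a \<le> b" "b \<le> T"
    and vanish: "\<And>s. s \<in> {0..a} \<Longrightarrow> y s = 0"
    and short: "2 * k * (sqrt b - sqrt a) < 1"
  shows "\<forall>s \<in> {0..b}. y s = 0"
proof -
  have cont_b: "continuous_on {0..b} y"
    using \<open>b \<le> T\<close> by (intro continuous_on_subset[OF cont]) auto
  obtain t where t: "t \<in> {0..b}" and max: "\<And>s. s \<in> {0..b} \<Longrightarrow> y s \<le> y t"
    using continuous_attains_sup[OF compact_Icc _ cont_b] assms(5,6) by fastforce
  have "0 \<le> y t" using nonneg t \<open>b \<le> T\<close> by auto
  have "y t \<le> 0"
  proof (cases "t \<le> a")
    case True then show ?thesis using vanish t by auto
  next
    case False
    have "y t \<le> k * integral {0..t} (\<lambda>s. 1 / (s * sqrt s) * integral {0..s} y)"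
      using ineq t \<open>b \<le> T\<close> by auto
    also have "\<dots> \<le> k * (2 * y t * (sqrt t - sqrt a))"
    proof (rule mult_left_mono[OF integral_singular_kernel_le \<open>k \<ge> 0\<close>])
      show "continuous_on {0..t} y" using t by (intro continuous_on_subset[OF cont_b]) auto
    qed (use False t max vanish \<open>0 \<le> a\<close> in auto)
    also have "\<dots> \<le> k * (2 * y t * (sqrt b - sqrt a))"
      using \<open>0 \<le> y t\<close> \<open>k \<ge> 0\<close> t by (intro mult_left_mono) auto
    finally have "y t \<le> k * (2 * y t * (sqrt b - sqrt a))" .
    then have "y t * (1 - 2 * k * (sqrt b - sqrt a)) \<le> 0" by (simp add: algebra_simps)
    then show ?thesis using short by (simp add: mult_le_0_iff)
  qed
  show ?thesis
  proof
    fix s assume "s \<in> {0..b}"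
    then have "y s \<le> y t" "0 \<le> y s" using max nonneg \<open>b \<le> T\<close> by auto
    then show "y s = 0" using \<open>y t \<le> 0\<close> by linarith
  qed
qed

lemma interval_step_induct:
  fixes P :: "real \<Rightarrow> bool" and \<delta> T t :: real
  assumes "0 < \<delta>" "P 0"
    and step: "\<And>a b. 0 \<le> a \<Longrightarrow> a \<le> b \<Longrightarrow> b \<le> a + \<delta> \<Longrightarrow> b \<le> T \<Longrightarrow> P a \<Longrightarrow> P b"
    and "t \<in> {0..T}"
  shows "P t"
proof -
  have "\<forall>t \<in> {0..T}. t \<le> real n * \<delta> \<longrightarrow> P t" for n
  proof (induction n)
    case 0 then show ?case using \<open>P 0\<close> by auto
  next
    case (Suc n)
    show ?case
    proof (intro ballI impI)
      fix t assume t: "t \<in> {0..T}" "t \<le> real (Suc n) * \<delta>"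
      show "P t"
      proof (cases "t \<le> real n * \<delta>")
        case True then show ?thesis using Suc t by blast
      next
        case False
        then have "P (real n * \<delta>)" using Suc t \<open>0 < \<delta>\<close> by simp
        moreover have "t \<le> real n * \<delta> + \<delta>" using t by (simp add: algebra_simps)
        ultimately show ?thesis using False t \<open>0 < \<delta>\<close> step[of "real n * \<delta>" t] by simp
      qed
    qed
  qed
  moreover obtain n :: nat where "t / \<delta> \<le> real n" using real_arch_simple by blast
  then have "t \<le> real n * \<delta>" using \<open>0 < \<delta>\<close> by (simp add: field_simps)
  ultimately show ?thesis using \<open>t \<in> {0..T}\<close> by blast
qed

theorem lemma3p3:
  fixes T k :: real and y :: "real \<Rightarrow> real"
  assumes "T > 0"
    and "continuous_on {0..T} y"
    and "\<And>t. t \<in> {0..T} \<Longrightarrow> y t \<ge> 0"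
    and "k \<ge> 0"
    and "\<And>t. t \<in> {0..T} \<Longrightarrow>
           y t \<le> k * integral {0..t} (\<lambda>s. 1 / (s * sqrt s) * integral {0..s} y)"
  shows "\<forall>t \<in> {0..T}. y t = 0"
proof
  fix t assume "t \<in> {0..T}"
  define \<delta> where "\<delta> = (1 / (2 * k + 1))\<^sup>2"
  define P where "P b \<longleftrightarrow> (\<forall>s \<in> {0..b}. y s = 0)" for b
  have "P t"
  proof (rule interval_step_induct[OF _ _ _ \<open>t \<in> {0..T}\<close>])
    show "0 < \<delta>" using \<open>k \<ge> 0\<close> by (simp add: \<delta>_def)
    show "P 0" using assms(1) assms(3,5)[of 0] by (simp add: P_def)
    fix a b assume ab: "0 \<le> a" "a \<le> b" "b \<le> a + \<delta>" "b \<le> T" "P a"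
    have "sqrt b - sqrt a \<le> sqrt (b - a)" using ab(1,2) by (rule sqrt_diff_le_sqrt_diff)
    also have "\<dots> \<le> sqrt \<delta>" using ab by simp
    also have "\<dots> = 1 / (2 * k + 1)" using \<open>k \<ge> 0\<close> by (simp add: \<delta>_def)
    finally have "2 * k * (sqrt b - sqrt a) \<le> 2 * k * (1 / (2 * k + 1))"
      by (rule mult_left_mono) (use \<open>k \<ge> 0\<close> in simp)
    also have "\<dots> < 1" using \<open>k \<ge> 0\<close> by (simp add: field_simps)
    finally have short: "2 * k * (sqrt b - sqrt a) < 1" .
    have vanish: "\<And>s. s \<in> {0..a} \<Longrightarrow> y s = 0" using \<open>P a\<close> by (simp add: P_def)
    show "P b" unfolding P_def by (rule vanishing_extends[OF assms(2-5) ab(1,2,4) vanish short])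
  qed
  then show "y t = 0" using \<open>t \<in> {0..T}\<close> by (simp add: P_def)
qed

end
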